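(* Assume (H1) and (H2). Then, as $z\to\infty$: (i) $q(z)\,|\mathfrak m'(z)|=2q(z)e^{\gamma(z)}\int_z^\infty e^{-\gamma(\xi)}d\xi\to1$; (ii) $\mathfrak m(z)/M(z)\to1$, where $M(z)=\int_z^\infty dy/q(y)$ (finite for large $z$); (iii) $\dfrac{\int_z^\infty e^{\gamma(y)}\big(\int_y^\infty e^{-\gamma(\xi)}d\xi\big)^2dy}{e^{2\gamma(z)}\big(\int_z^\infty e^{-\gamma(\xi)}d\xi\big)^3}\to1$; (iv) $\dfrac{8\int_z^\infty e^{\gamma(y)}\int_y^\infty e^{\gamma(\eta)}\big(\int_\eta^\infty e^{-\gamma(\xi)}d\xi\big)^2d\eta\,dy}{\int_z^\infty q(y)^{-3}dy}\to1$.
   Context: Let $q\in C^1([0,\infty))$ and $\gamma(y)=2\int_0^yq$. (H1): $\int_0^\infty e^{\gamma(y)}\int_y^\infty e^{-\gamma(\xi)}d\xi\,dy<\infty$. (H2): $\lim_{x\to\infty}q(x)=\infty$ and $\lim_{x\to\infty}q'(x)/q(x)^2=0$. $\mathfrak m(z)=2\int_z^\infty e^{\gamma(y)}\int_y^\infty e^{-\gamma(\xi)}d\xi\,dy$, so $\mathfrak m'(z)=-2e^{\gamma(z)}\int_z^\infty e^{-\gamma(\xi)}d\xi$. *)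

theory Defs
  imports "HOL-Analysis.Analysis"
begin

definition gam :: "(real \<Rightarrow> real) \<Rightarrow> real \<Rightarrow> real" where
  "gam q y = 2 * integral {0..y} q"

definition tailE :: "(real \<Rightarrow> real) \<Rightarrow> real \<Rightarrow> real" where
  "tailE q y = integral {y..} (\<lambda>\<xi>. exp (- gam q \<xi>))"

definition frak_m :: "(real \<Rightarrow> real) \<Rightarrow> real \<Rightarrow> real" where
  "frak_m q z = 2 * integral {z..} (\<lambda>y. exp (gam q y) * tailE q y)"

definition bigM :: "(real \<Rightarrow> real) \<Rightarrow> real \<Rightarrow> real" where
  "bigM q z = integral {z..} (\<lambda>y. 1 / q y)"

end

theory Submission
  imports Defs
begin

text \<open>
  Write \<open>\<gamma> = gam q\<close> and \<open>T = tailE q\<close>. Everything rests on one comparison principle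
  for positive continuous functions: if \<open>f / g \<longrightarrow> 1\<close> and \<open>f\<close> is integrable at infinity,
  then so is \<open>g\<close>, and the ratio of the tail integrals from \<open>z\<close> tends to 1. In particular a
  tail integral is asymptotic to \<open>G\<close> whenever \<open>G \<longrightarrow> 0\<close> and \<open>- G'\<close> is asymptotic to the integrand.
  (i) \<open>(e^-\<gamma> / 2q)' = - e^-\<gamma> (1 + q' / 2q\<^sup>2)\<close> and \<open>q' / q\<^sup>2 \<longrightarrow> 0\<close>, so \<open>T \<sim> e^-\<gamma> / 2q\<close>.
  (ii) By (i) the integrand \<open>2 e^\<gamma> T\<close> of \<open>frak_m q\<close> is asymptotic to \<open>1 / q\<close>.
  (iii) \<open>(e^2\<gamma> T\<^sup>3)' = - e^\<gamma> T\<^sup>2 (3 - 2R)\<close>, where \<open>R = 2q e^\<gamma> T \<longrightarrow> 1\<close> by (i).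
  (iv) By (iii) and (i), \<open>8 e^\<gamma> \<integral>\<^sub>y\<^sup>\<infinity> e^\<gamma> T\<^sup>2 \<sim> 8 e^3\<gamma> T\<^sup>3 = R\<^sup>3 / q\<^sup>3 \<sim> 1 / q\<^sup>3\<close>.
\<close>

lemma integrable_on_atLeast_mono:
  fixes h :: "real \<Rightarrow> real"
  assumes "h integrable_on {a..}" "\<And>y. y \<ge> a \<Longrightarrow> h y \<ge> 0" "a \<le> z"
  shows "h integrable_on {z..}"
proof -
  have "h absolutely_integrable_on {a..}"
    by (rule nonnegative_absolutely_integrable_1) (use assms in auto)
  then have "h absolutely_integrable_on {z..}"
    by (rule set_integrable_subset) (use assms in auto)
  then show ?thesis by (simp add: absolutely_integrable_on_def)
qed

lemma integral_atLeast_split: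
  fixes h :: "real \<Rightarrow> real"
  assumes "h integrable_on {a..}" "\<And>y. y \<ge> a \<Longrightarrow> h y \<ge> 0" "a \<le> z"
  shows "integral {a..} h = integral {a..z} h + integral {z..} h"
proof -
  have "h integrable_on {a..z}"
    by (rule integrable_on_subinterval[OF assms(1)]) auto
  moreover have "h integrable_on {z..}" by (rule integrable_on_atLeast_mono[OF assms])
  ultimately have "(h has_integral (integral {a..z} h + integral {z..} h)) ({a..z} \<union> {z..})"
    by (intro has_integral_Un) (auto intro: negligible_subset[of "{z}"])
  moreover have "{a..z} \<union> {z..} = {a..}" using assms(3) by auto
  ultimately show ?thesis by (simp add: integral_unique)
qed

lemma integral_atLeast_pos:
  fixes g :: "real \<Rightarrow> real"
  assumes cont: "continuous_on {z..} g" and pos: "\<And>y. y \<ge> z \<Longrightarrow> g y > 0"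
    and int: "g integrable_on {z..}"
  shows "integral {z..} g > 0"
proof -
  have "continuous_on {z..z+1} g" by (rule continuous_on_subset[OF cont]) auto
  then obtain x where x: "x \<in> {z..z+1}" "\<And>y. y \<in> {z..z+1} \<Longrightarrow> g x \<le> g y"
    using continuous_attains_inf[of "{z..z+1}" g] by auto
  have "g integrable_on {z..z+1}" by (rule integrable_on_subinterval[OF int]) auto
  then have "integral {z..z+1} (\<lambda>_. g x) \<le> integral {z..z+1} g"
    by (intro integral_le) (use x in auto)
  moreover have "g x > 0" using pos x by auto
  moreover have "integral {z+1..} g \<ge> 0"
    using integrable_on_atLeast_mono[OF int, of "z+1"] pos
    by (intro integral_nonneg) (auto simp: less_imp_le)
  moreover have "integral {z..} g = integral {z..z+1} g + integral {z+1..} g"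
    by (rule integral_atLeast_split) (use int pos in \<open>auto simp: less_imp_le\<close>)
  ultimately show ?thesis by simp
qed

lemma integrable_on_atLeast_dominated:
  fixes f g :: "real \<Rightarrow> real"
  assumes "continuous_on {z..} g" "f integrable_on {z..}" "\<And>y. y \<ge> z \<Longrightarrow> \<bar>g y\<bar> \<le> f y"
  shows "g integrable_on {z..}"
proof (rule measurable_bounded_by_integrable_imp_integrable_real)
  show "g \<in> borel_measurable (lebesgue_on {z..})"
    using assms(1) by (rule continuous_imp_measurable_on_sets_lebesgue) auto
qed (use assms in auto)

lemma integrable_on_atLeast_half_close:
  fixes f g :: "real \<Rightarrow> real"
  assumes "continuous_on {a..} g" "f integrable_on {a..}" "\<And>y. y \<ge> a \<Longrightarrow> \<bar>f y - g y\<bar> \<le> 1/2 * g y"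
  shows "g integrable_on {a..}"
proof (rule integrable_on_atLeast_dominated)
  show "(\<lambda>y. 2 * f y) integrable_on {a..}"
    using assms(2) by (rule integrable_on_mult_right)
  show "\<bar>g y\<bar> \<le> 2 * f y" if "y \<ge> a" for y
    using assms(3)[OF that] by linarith
qed (rule assms(1))

lemma tail_integral_has_real_derivative:
  fixes h :: "real \<Rightarrow> real"
  assumes "continuous_on {a..} h" "h integrable_on {a..}" "\<And>y. y \<ge> a \<Longrightarrow> h y \<ge> 0" "a < y"
  shows "((\<lambda>t. integral {t..} h) has_real_derivative - h y) (at y)"
proof -
  have "((\<lambda>t. integral {a..t} h) has_real_derivative h y) (at y within {a..y+1})"
    by (rule integral_has_real_derivative) (use assms in \<open>auto intro: continuous_on_subset\<close>)
  moreover have "at y within {a..y+1} = at y"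
    by (rule at_within_interior) (use assms in auto)
  ultimately have "((\<lambda>t. integral {a..} h - integral {a..t} h) has_real_derivative - h y) (at y)"
    using DERIV_diff[OF DERIV_const] by fastforce
  then show ?thesis
  proof (rule has_field_derivative_transform_within_open[where S="{a<..}"])
    show "integral {a..} h - integral {a..x} h = integral {x..} h" if "x \<in> {a<..}" for x
      using integral_atLeast_split[OF assms(2,3), of x] that by auto
  qed (use assms in auto)
qed

lemma continuous_on_tail_integral:
  fixes h :: "real \<Rightarrow> real"
  assumes "continuous_on {a..} h" "h integrable_on {a..}" "\<And>y. y \<ge> a \<Longrightarrow> h y \<ge> 0" "a < b"
  shows "continuous_on {b..} (\<lambda>t. integral {t..} h)"
proof (intro continuous_at_imp_continuous_on ballI)
  fix t assume "t \<in> {b..}"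
  with assms show "isCont (\<lambda>t. integral {t..} h) t"
    by (intro DERIV_isCont[OF tail_integral_has_real_derivative[OF assms(1-3)]]) auto
qed

lemma has_integral_atLeast_antiderivative:
  fixes G g :: "real \<Rightarrow> real"
  assumes der: "\<And>y. y \<ge> a \<Longrightarrow> (G has_real_derivative - g y) (at y)"
    and cont: "continuous_on {a..} g" and nonneg: "\<And>y. y \<ge> a \<Longrightarrow> g y \<ge> 0"
    and lim: "(G \<longlongrightarrow> 0) at_top"
  shows "(g has_integral G a) {a..}"
proof (rule has_integral_to_inf)
  show "g integrable_on {a..y}" for y
    by (cases "a \<le> y") (auto intro!: integrable_continuous_real continuous_on_subset[OF cont])
  have "integral {a..y} g = G a - G y" if "a \<le> y" for y
  proof -
    have "((\<lambda>x. - g x) has_integral (G y - G a)) {a..y}"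
      by (rule fundamental_theorem_of_calculus[OF that])
        (use der in \<open>auto simp: has_real_derivative_iff_has_vector_derivative
           intro: has_vector_derivative_at_within\<close>)
    from has_integral_neg[OF this] show ?thesis by (simp add: integral_unique)
  qed
  then have "\<forall>\<^sub>F y in at_top. G a - G y = integral {a..y} g"
    unfolding eventually_at_top_linorder by (intro exI[of _ a]) auto
  moreover have "((\<lambda>y. G a - G y) \<longlongrightarrow> G a - 0) at_top"
    by (intro tendsto_intros lim)
  ultimately show "((\<lambda>y. integral {a..y} g) \<longlongrightarrow> G a) at_top"
    by (simp add: tendsto_cong)
qed (use nonneg in auto)

lemma eventually_abs_diff_le_of_ratio_tendsto_1:
  fixes f g :: "real \<Rightarrow> real"
  assumes "((\<lambda>y. f y / g y) \<longlongrightarrow> 1) F" "eventually (\<lambda>y. g y > 0) F" "e > 0"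
  shows "eventually (\<lambda>y. \<bar>f y - g y\<bar> \<le> e * g y) F"
proof -
  have "eventually (\<lambda>y. \<bar>f y / g y - 1\<bar> < e) F"
    using assms(1,3) by (auto simp: tendsto_iff dist_real_def)
  with assms(2) show ?thesis
  proof eventually_elim
    case (elim y)
    then have "\<bar>(f y - g y) / g y\<bar> < e" by (simp add: diff_divide_distrib)
    with elim show ?case by (simp add: abs_div pos_divide_less_eq)
  qed
qed

lemma abs_integral_ratio_sub_1_le:
  fixes f g :: "real \<Rightarrow> real"
  assumes "f integrable_on S" "g integrable_on S" "integral S g > 0"
    and "\<And>y. y \<in> S \<Longrightarrow> \<bar>f y - g y\<bar> \<le> e * g y"
  shows "\<bar>integral S f / integral S g - 1\<bar> \<le> e"
proof -
  have "norm (integral S (\<lambda>y. f y - g y)) \<le> integral S (\<lambda>y. e * g y)"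
    using assms by (intro integral_norm_bound_integral integrable_diff integrable_on_mult_right) auto
  then have "\<bar>integral S f - integral S g\<bar> \<le> e * integral S g"
    using assms(1,2) by (simp add: integral_diff)
  moreover have "integral S f / integral S g - 1 = (integral S f - integral S g) / integral S g"
    using assms(3) by (simp add: field_simps)
  ultimately show ?thesis
    using assms(3) by (simp add: abs_div pos_divide_le_eq)
qed

lemma ratio_tendsto_1_flip:
  fixes f g :: "'a \<Rightarrow> real"
  assumes "((\<lambda>x. f x / g x) \<longlongrightarrow> 1) F"
  shows "((\<lambda>x. g x / f x) \<longlongrightarrow> 1) F"
  using tendsto_inverse[OF assms] by simp

lemma tail_integral_ratio_tendsto_1:
  fixes f g :: "real \<Rightarrow> real"
  assumes cont: "continuous_on {a..} f" "continuous_on {a..} g"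
    and int: "f integrable_on {a..}"
    and pos: "\<And>y. y \<ge> a \<Longrightarrow> f y > 0 \<and> g y > 0"
    and lim: "((\<lambda>y. f y / g y) \<longlongrightarrow> 1) at_top"
  shows "eventually (\<lambda>z. g integrable_on {z..}) at_top \<and>
    ((\<lambda>z. integral {z..} f / integral {z..} g) \<longlongrightarrow> 1) at_top"
proof -
  have g_pos: "eventually (\<lambda>y. g y > 0) at_top"
    using pos by (auto simp: eventually_at_top_linorder)
  have int_f: "f integrable_on {z..}" if "z \<ge> a" for z
    using integrable_on_atLeast_mono[OF int _ that] pos by (auto simp: less_imp_le)
  have "eventually (\<lambda>y. \<bar>f y - g y\<bar> \<le> 1/2 * g y) at_top"
    by (rule eventually_abs_diff_le_of_ratio_tendsto_1[OF lim g_pos]) simp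
  then obtain b' where b': "\<And>y. y \<ge> b' \<Longrightarrow> \<bar>f y - g y\<bar> \<le> 1/2 * g y"
    by (auto simp: eventually_at_top_linorder)
  define b where "b = max a b'"
  have b: "b \<ge> a" "\<And>y. y \<ge> b \<Longrightarrow> \<bar>f y - g y\<bar> \<le> 1/2 * g y"
    using b' by (auto simp: b_def)
  have int_g: "g integrable_on {z..}" if "z \<ge> b" for z
  proof (rule integrable_on_atLeast_half_close)
    show "continuous_on {z..} g"
      using that b(1) by (intro continuous_on_subset[OF cont(2)]) auto
    show "f integrable_on {z..}"
      using that b(1) by (intro int_f) simp
    show "\<bar>f y - g y\<bar> \<le> 1/2 * g y" if "y \<ge> z" for y
      using b(2) that \<open>z \<ge> b\<close> by simp
  qed
  have "eventually (\<lambda>z. \<bar>integral {z..} f / integral {z..} g - 1\<bar> < e) at_top" if "e > 0" for e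
  proof -
    have "eventually (\<lambda>y. \<bar>f y - g y\<bar> \<le> e/2 * g y) at_top"
      by (rule eventually_abs_diff_le_of_ratio_tendsto_1[OF lim g_pos]) (use that in simp)
    then obtain c where c: "\<And>y. y \<ge> c \<Longrightarrow> \<bar>f y - g y\<bar> \<le> e/2 * g y"
      by (auto simp: eventually_at_top_linorder)
    have "\<bar>integral {z..} f / integral {z..} g - 1\<bar> \<le> e/2" if "z \<ge> max b c" for z
    proof (rule abs_integral_ratio_sub_1_le)
      show "integral {z..} g > 0"
        using that b(1) pos int_g[of z]
        by (intro integral_atLeast_pos continuous_on_subset[OF cont(2)]) auto
    qed (use that b(1) c int_f int_g in auto)
    with \<open>e > 0\<close> show ?thesis
      unfolding eventually_at_top_linorder by (intro exI[of _ "max b c"] allI impI) fastforce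
  qed
  then have "((\<lambda>z. integral {z..} f / integral {z..} g) \<longlongrightarrow> 1) at_top"
    by (simp add: tendsto_iff dist_real_def)
  moreover have "eventually (\<lambda>z. g integrable_on {z..}) at_top"
    using int_g by (auto simp: eventually_at_top_linorder)
  ultimately show ?thesis by simp
qed

lemma tail_integral_asymp_antiderivative:
  fixes f g G :: "real \<Rightarrow> real"
  assumes der: "\<And>y. y \<ge> a \<Longrightarrow> (G has_real_derivative - g y) (at y)"
    and G_lim: "(G \<longlongrightarrow> 0) at_top"
    and cont: "continuous_on {a..} f" "continuous_on {a..} g"
    and pos: "\<And>y. y \<ge> a \<Longrightarrow> f y > 0 \<and> g y > 0"
    and lim: "((\<lambda>y. g y / f y) \<longlongrightarrow> 1) at_top"
  shows "eventually (\<lambda>z. f integrable_on {z..}) at_top \<and>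
    ((\<lambda>z. integral {z..} f / G z) \<longlongrightarrow> 1) at_top"
proof -
  have G_int: "(g has_integral G z) {z..}" if "z \<ge> a" for z
    using that der pos G_lim
    by (intro has_integral_atLeast_antiderivative continuous_on_subset[OF cont(2)]) (auto simp: less_imp_le)
  have "eventually (\<lambda>z. f integrable_on {z..}) at_top \<and>
    ((\<lambda>z. integral {z..} g / integral {z..} f) \<longlongrightarrow> 1) at_top"
    using G_int[of a] pos by (intro tail_integral_ratio_tendsto_1[OF cont(2,1) _ _ lim]) auto
  then have int_f: "eventually (\<lambda>z. f integrable_on {z..}) at_top"
    and lim_fg: "((\<lambda>z. integral {z..} f / integral {z..} g) \<longlongrightarrow> 1) at_top"
    by (auto intro: ratio_tendsto_1_flip)
  have "eventually (\<lambda>z. integral {z..} f / integral {z..} g = integral {z..} f / G z) at_top"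
    using G_int unfolding eventually_at_top_linorder by (auto intro!: exI[of _ a] simp: integral_unique)
  from Lim_transform_eventually[OF lim_fg this] int_f show ?thesis by simp
qed

locale drift_H1_H2 =
  fixes q q' :: "real \<Rightarrow> real"
  assumes C1_deriv: "\<And>x. x \<ge> 0 \<Longrightarrow> (q has_real_derivative q' x) (at x within {0..})"
    and C1_cont: "continuous_on {0..} q'"
    and H1_inner: "(\<lambda>\<xi>. exp (- gam q \<xi>)) integrable_on {0..}"
    and H1_outer: "(\<lambda>y. exp (gam q y) * tailE q y) integrable_on {0..}"
    and H2_q: "filterlim q at_top at_top"
    and H2_q': "((\<lambda>x. q' x / (q x)\<^sup>2) \<longlongrightarrow> 0) at_top"
begin

lemma continuous_on_q: "a \<ge> 0 \<Longrightarrow> continuous_on {a..} q"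
  by (rule continuous_on_subset[of "{0..}"])
    (auto simp: continuous_on_eq_continuous_within intro: DERIV_continuous C1_deriv)

lemma continuous_on_q': "a \<ge> 0 \<Longrightarrow> continuous_on {a..} q'"
  by (rule continuous_on_subset[OF C1_cont]) auto

lemma q_has_derivative: "y > 0 \<Longrightarrow> (q has_real_derivative q' y) (at y)"
  using C1_deriv[of y] at_within_interior[of y "{0..}"] by auto

lemma gam_has_derivative:
  assumes "y > 0"
  shows "(gam q has_real_derivative 2 * q y) (at y)"
proof -
  have "((\<lambda>t. integral {0..t} q) has_real_derivative q y) (at y within {0..y+1})"
    using assms continuous_on_q[of 0]
    by (intro integral_has_real_derivative) (auto intro: continuous_on_subset)
  moreover have "at y within {0..y+1} = at y"
    by (rule at_within_interior) (use assms in auto)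
  ultimately show ?thesis
    unfolding gam_def[abs_def] by (auto intro: DERIV_cmult)
qed

lemma continuous_on_gam: "a > 0 \<Longrightarrow> continuous_on {a..} (gam q)"
  by (intro continuous_at_imp_continuous_on ballI DERIV_isCont[OF gam_has_derivative]) auto

lemma integrable_exp_minus_gam: "z \<ge> 0 \<Longrightarrow> (\<lambda>t. exp (- gam q t)) integrable_on {z..}"
  by (rule integrable_on_atLeast_mono[OF H1_inner]) auto

lemma tailE_has_derivative:
  assumes "y > 0"
  shows "(tailE q has_real_derivative - exp (- gam q y)) (at y)"
  unfolding tailE_def[abs_def] using assms integrable_exp_minus_gam[of "y/2"]
  by (intro tail_integral_has_real_derivative[of "y/2"] continuous_intros continuous_on_gam) auto

lemma continuous_on_tailE: "a > 0 \<Longrightarrow> continuous_on {a..} (tailE q)"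
  by (intro continuous_at_imp_continuous_on ballI DERIV_isCont[OF tailE_has_derivative]) auto

lemma tailE_pos: "y > 0 \<Longrightarrow> tailE q y > 0"
  unfolding tailE_def
  by (intro integral_atLeast_pos integrable_exp_minus_gam continuous_intros continuous_on_gam) auto

lemma tailE_nonneg: "y \<ge> 0 \<Longrightarrow> tailE q y \<ge> 0"
  unfolding tailE_def by (intro integral_nonneg integrable_exp_minus_gam) auto

lemma eventually_q_ge_1: "eventually (\<lambda>y. y \<ge> 1 \<and> q y \<ge> 1) at_top"
  using eventually_conj[OF eventually_ge_at_top H2_q[unfolded filterlim_at_top, rule_format]] .

lemma beyond_q_ge_1:
  assumes "eventually P at_top"
  obtains a where "a > 0" "\<And>y. y \<ge> a \<Longrightarrow> q y \<ge> 1" "\<And>y. y \<ge> a \<Longrightarrow> P y"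
proof -
  obtain a where a: "\<And>y. y \<ge> a \<Longrightarrow> (y \<ge> 1 \<and> q y \<ge> 1) \<and> P y"
    using eventually_conj[OF eventually_q_ge_1 assms] unfolding eventually_at_top_linorder by blast
  show ?thesis
  proof (rule that[of a])
    show "a > 0" using a[OF order_refl] by simp
  qed (use a in blast)+
qed

lemma q_ge_1_beyond:
  obtains a where "a > 0" "\<And>y. y \<ge> a \<Longrightarrow> q y \<ge> 1"
proof -
  obtain a where a_pos: "a > 0" and q_ge: "\<And>y. y \<ge> a \<Longrightarrow> q y \<ge> 1"
    using beyond_q_ge_1[OF eventually_True] by metis
  from a_pos q_ge show ?thesis by (rule that)
qed

lemma exp_minus_gam_antimono:
  assumes "0 < a" "\<And>y. y \<ge> a \<Longrightarrow> q y \<ge> 0" "a \<le> y"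
  shows "exp (- gam q y) \<le> exp (- gam q a)"
proof -
  have "gam q a \<le> gam q y"
  proof (rule DERIV_nonneg_imp_nondecreasing[OF assms(3)])
    fix x assume "a \<le> x" "x \<le> y"
    then show "\<exists>d. (gam q has_real_derivative d) (at x) \<and> 0 \<le> d"
      using assms(1,2) gam_has_derivative[of x] by (intro exI[of _ "2 * q x"]) auto
  qed
  then show ?thesis by simp
qed

lemma exp_minus_gam_over_q_has_derivative:
  assumes "y > 0" "q y \<noteq> 0"
  shows "((\<lambda>t. exp (- gam q t) / (2 * q t)) has_real_derivative
    - (exp (- gam q y) * (1 + q' y / (2 * (q y)\<^sup>2)))) (at y)"
  using assms
  by (auto intro!: derivative_eq_intros gam_has_derivative[THEN DERIV_cong] q_has_derivative
      simp: field_simps power2_eq_square)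

lemma exp_minus_gam_over_q_tendsto_0: "((\<lambda>y. exp (- gam q y) / (2 * q y)) \<longlongrightarrow> 0) at_top"
proof -
  obtain a where a_pos: "a > 0" and q_ge: "\<And>y. y \<ge> a \<Longrightarrow> q y \<ge> 1"
    using q_ge_1_beyond by metis
  have "norm (exp (- gam q y) / (2 * q y)) \<le> exp (- gam q a) * inverse (q y)" if "y \<ge> a" for y
  proof -
    have "q y \<ge> 1" by (rule q_ge[OF that])
    have "exp (- gam q y) \<le> exp (- gam q a)"
      by (rule exp_minus_gam_antimono[OF a_pos _ that]) (use q_ge in fastforce)
    have "norm (exp (- gam q y) / (2 * q y)) = exp (- gam q y) / (2 * q y)"
      using \<open>q y \<ge> 1\<close> by simp
    also have "\<dots> \<le> exp (- gam q a) / q y"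
      using \<open>q y \<ge> 1\<close> \<open>exp (- gam q y) \<le> exp (- gam q a)\<close> by (intro frac_le) simp_all
    also have "\<dots> = exp (- gam q a) * inverse (q y)"
      by (rule divide_inverse)
    finally show ?thesis .
  qed
  then have "eventually (\<lambda>y. norm (exp (- gam q y) / (2 * q y)) \<le> exp (- gam q a) * inverse (q y)) at_top"
    unfolding eventually_at_top_linorder by blast
  moreover have "((\<lambda>y. exp (- gam q a) * inverse (q y)) \<longlongrightarrow> 0) at_top"
    by (intro tendsto_mult_right_zero tendsto_inverse_0_at_top H2_q)
  ultimately show ?thesis by (rule Lim_null_comparison)
qed

lemma q_exp_gam_tailE_tendsto_1: "((\<lambda>z. 2 * q z * exp (gam q z) * tailE q z) \<longlongrightarrow> 1) at_top"
proof -
  have q'_small_eventually: "eventually (\<lambda>y. \<bar>q' y / (q y)\<^sup>2\<bar> < 1) at_top"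
    using H2_q'[unfolded tendsto_iff, rule_format, of 1] by (simp add: dist_real_def)
  then obtain a where a_pos: "a > 0" and q_ge: "\<And>y. y \<ge> a \<Longrightarrow> q y \<ge> 1"
    and q'_small: "\<And>y. y \<ge> a \<Longrightarrow> \<bar>q' y / (q y)\<^sup>2\<bar> < 1"
    using beyond_q_ge_1[OF q'_small_eventually] by metis
  define g where "g y = exp (- gam q y) * (1 + q' y / (2 * (q y)\<^sup>2))" for y
  have "eventually (\<lambda>z. (\<lambda>t. exp (- gam q t)) integrable_on {z..}) at_top \<and>
    ((\<lambda>z. integral {z..} (\<lambda>t. exp (- gam q t)) / (exp (- gam q z) / (2 * q z))) \<longlongrightarrow> 1) at_top"
  proof (rule tail_integral_asymp_antiderivative[of a _ g])
    show "((\<lambda>t. exp (- gam q t) / (2 * q t)) has_real_derivative - g y) (at y)" if "y \<ge> a" for y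
      unfolding g_def using that a_pos q_ge[OF that] by (intro exp_minus_gam_over_q_has_derivative) auto
    have "\<forall>y\<in>{a..}. q y \<noteq> 0" using q_ge by force
    then show "continuous_on {a..} (\<lambda>t. exp (- gam q t))" "continuous_on {a..} g"
      unfolding g_def using a_pos
      by (intro continuous_intros continuous_on_gam continuous_on_q continuous_on_q'; simp)+
    show "exp (- gam q y) > 0 \<and> g y > 0" if "y \<ge> a" for y
    proof -
      have "q' y / (q y)\<^sup>2 > -1" using q'_small[OF that] by linarith
      then show ?thesis by (simp add: g_def)
    qed
    have "((\<lambda>y. 1 + q' y / (q y)\<^sup>2 / 2) \<longlongrightarrow> 1 + 0 / 2) at_top"
      by (intro tendsto_intros H2_q') auto
    then show "((\<lambda>y. g y / exp (- gam q y)) \<longlongrightarrow> 1) at_top"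
      by (simp add: g_def mult.commute)
  qed (rule exp_minus_gam_over_q_tendsto_0)
  moreover have "integral {z..} (\<lambda>t. exp (- gam q t)) / (exp (- gam q z) / (2 * q z))
      = 2 * q z * exp (gam q z) * tailE q z" for z
    by (simp add: tailE_def field_simps exp_minus_inverse flip: exp_add)
  ultimately show ?thesis by simp
qed

lemma frak_m_bigM_tendsto_1:
  "eventually (\<lambda>z. (\<lambda>y. 1 / q y) integrable_on {z..}) at_top \<and>
    ((\<lambda>z. frak_m q z / bigM q z) \<longlongrightarrow> 1) at_top"
proof -
  obtain a where a_pos: "a > 0" and q_ge: "\<And>y. y \<ge> a \<Longrightarrow> q y \<ge> 1"
    using q_ge_1_beyond by metis
  have "eventually (\<lambda>z. (\<lambda>y. 1 / q y) integrable_on {z..}) at_top \<and>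
    ((\<lambda>z. integral {z..} (\<lambda>y. 2 * (exp (gam q y) * tailE q y)) / integral {z..} (\<lambda>y. 1 / q y))
      \<longlongrightarrow> 1) at_top"
  proof (rule tail_integral_ratio_tendsto_1[of a])
    show "continuous_on {a..} (\<lambda>y. 2 * (exp (gam q y) * tailE q y))"
      using a_pos by (intro continuous_intros continuous_on_gam continuous_on_tailE)
    have "\<forall>y\<in>{a..}. q y \<noteq> 0" using q_ge by force
    then show "continuous_on {a..} (\<lambda>y. 1 / q y)"
      using a_pos by (intro continuous_intros continuous_on_q) simp_all
    have "(\<lambda>y. exp (gam q y) * tailE q y) integrable_on {a..}"
      using a_pos tailE_nonneg by (intro integrable_on_atLeast_mono[OF H1_outer]) auto
    then show "(\<lambda>y. 2 * (exp (gam q y) * tailE q y)) integrable_on {a..}"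
      by (rule integrable_on_mult_right)
    show "2 * (exp (gam q y) * tailE q y) > 0 \<and> 1 / q y > 0" if "y \<ge> a" for y
      using tailE_pos[of y] q_ge[OF that] a_pos that by simp
    show "((\<lambda>y. 2 * (exp (gam q y) * tailE q y) / (1 / q y)) \<longlongrightarrow> 1) at_top"
      using q_exp_gam_tailE_tendsto_1 by (simp add: ac_simps)
  qed
  then show ?thesis by (simp add: frak_m_def bigM_def)
qed

lemma exp_gam_tailE_tendsto_0: "((\<lambda>y. exp (gam q y) * tailE q y) \<longlongrightarrow> 0) at_top"
proof -
  have "eventually (\<lambda>y. 2 * q y * exp (gam q y) * tailE q y * inverse (q y) / 2 =
      exp (gam q y) * tailE q y) at_top"
    using eventually_q_ge_1 by eventually_elim simp
  moreover have "((\<lambda>y. 2 * q y * exp (gam q y) * tailE q y * inverse (q y) / 2) \<longlongrightarrow> 1 * 0 / 2) at_top"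
    by (intro tendsto_intros q_exp_gam_tailE_tendsto_1 tendsto_inverse_0_at_top H2_q) simp
  ultimately have "((\<lambda>y. exp (gam q y) * tailE q y) \<longlongrightarrow> 1 * 0 / 2) at_top"
    by (rule Lim_transform_eventually[rotated])
  then show ?thesis by simp
qed

lemma exp_gam_tailE_cube_has_derivative:
  assumes "y > 0"
  shows "((\<lambda>t. exp (2 * gam q t) * tailE q t ^ 3) has_real_derivative
    - (exp (gam q y) * (tailE q y)\<^sup>2 * (3 - 2 * (2 * q y * exp (gam q y) * tailE q y)))) (at y)"
  using assms
  by (auto intro!: derivative_eq_intros gam_has_derivative tailE_has_derivative)
    (simp only: exp_double exp_minus; simp add: field_simps power2_eq_square power3_eq_cube)

lemma exp_gam_tailE_cube_tendsto_0: "((\<lambda>y. exp (2 * gam q y) * tailE q y ^ 3) \<longlongrightarrow> 0) at_top"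
proof -
  obtain a where a_pos: "a > 0" and q_ge: "\<And>y. y \<ge> a \<Longrightarrow> q y \<ge> 1"
    using q_ge_1_beyond by metis
  have "norm (exp (2 * gam q y) * tailE q y ^ 3) \<le> exp (- gam q a) * (exp (gam q y) * tailE q y) ^ 3"
    if "y \<ge> a" for y
  proof -
    have "exp (- gam q y) \<le> exp (- gam q a)"
      by (rule exp_minus_gam_antimono[OF a_pos _ that]) (use q_ge in fastforce)
    moreover have "tailE q y \<ge> 0" using tailE_nonneg[of y] that a_pos by simp
    moreover have "exp (2 * gam q y) * tailE q y ^ 3 = exp (- gam q y) * (exp (gam q y) * tailE q y) ^ 3"
      unfolding exp_double exp_minus by (simp add: field_simps power3_eq_cube power2_eq_square)
    ultimately show ?thesis by (simp add: mult_right_mono)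
  qed
  then have "eventually (\<lambda>y. norm (exp (2 * gam q y) * tailE q y ^ 3)
      \<le> exp (- gam q a) * (exp (gam q y) * tailE q y) ^ 3) at_top"
    unfolding eventually_at_top_linorder by blast
  moreover have "((\<lambda>y. exp (- gam q a) * (exp (gam q y) * tailE q y) ^ 3) \<longlongrightarrow> 0) at_top"
    using tendsto_power[OF exp_gam_tailE_tendsto_0, of 3] by (intro tendsto_mult_right_zero) simp
  ultimately show ?thesis by (rule Lim_null_comparison)
qed

lemma tailE_square_integral_tendsto_1:
  "eventually (\<lambda>z. (\<lambda>y. exp (gam q y) * (tailE q y)\<^sup>2) integrable_on {z..}) at_top \<and>
    ((\<lambda>z. integral {z..} (\<lambda>y. exp (gam q y) * (tailE q y)\<^sup>2)
      / (exp (2 * gam q z) * (tailE q z) ^ 3)) \<longlongrightarrow> 1) at_top"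
proof -
  define R where "R y = 2 * q y * exp (gam q y) * tailE q y" for y
  have R_lim: "(R \<longlongrightarrow> 1) at_top"
    unfolding R_def by (rule q_exp_gam_tailE_tendsto_1)
  have R_small: "eventually (\<lambda>y. R y < 3/2) at_top"
    by (rule order_tendstoD(2)[OF R_lim]) simp
  obtain a where a_pos: "a > 0" and q_ge: "\<And>y. y \<ge> a \<Longrightarrow> q y \<ge> 1"
    and R_lt: "\<And>y. y \<ge> a \<Longrightarrow> R y < 3/2"
    using beyond_q_ge_1[OF R_small] by metis
  show ?thesis
  proof (rule tail_integral_asymp_antiderivative[of a _
        "\<lambda>y. exp (gam q y) * (tailE q y)\<^sup>2 * (3 - 2 * R y)"])
    show "((\<lambda>y. exp (2 * gam q y) * tailE q y ^ 3) has_real_derivative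
        - (exp (gam q y) * (tailE q y)\<^sup>2 * (3 - 2 * R y))) (at y)" if "y \<ge> a" for y
      using exp_gam_tailE_cube_has_derivative[of y] that a_pos by (simp add: R_def)
    have "\<forall>y\<in>{a..}. q y \<noteq> 0" using q_ge by force
    then show "continuous_on {a..} (\<lambda>y. exp (gam q y) * (tailE q y)\<^sup>2)"
      "continuous_on {a..} (\<lambda>y. exp (gam q y) * (tailE q y)\<^sup>2 * (3 - 2 * R y))"
      unfolding R_def using a_pos
      by (intro continuous_intros continuous_on_gam continuous_on_tailE continuous_on_q; simp)+
    show "exp (gam q y) * (tailE q y)\<^sup>2 > 0 \<and> exp (gam q y) * (tailE q y)\<^sup>2 * (3 - 2 * R y) > 0"
      if "y \<ge> a" for y
      using tailE_pos[of y] R_lt[OF that] that a_pos by simp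
    have "eventually (\<lambda>y. 3 - 2 * R y = exp (gam q y) * (tailE q y)\<^sup>2 * (3 - 2 * R y)
        / (exp (gam q y) * (tailE q y)\<^sup>2)) at_top"
      using eventually_gt_at_top[of 0] by eventually_elim (use tailE_pos in force)
    moreover have "((\<lambda>y. 3 - 2 * R y) \<longlongrightarrow> 3 - 2 * 1) at_top"
      by (intro tendsto_intros R_lim)
    ultimately show "((\<lambda>y. exp (gam q y) * (tailE q y)\<^sup>2 * (3 - 2 * R y)
        / (exp (gam q y) * (tailE q y)\<^sup>2)) \<longlongrightarrow> 1) at_top"
      by (auto intro: Lim_transform_eventually)
  qed (rule exp_gam_tailE_cube_tendsto_0)
qed

lemma q_cube_exp_gam_tail_integral_tendsto_1:
  "((\<lambda>y. 8 * (q y) ^ 3 * (exp (gam q y) *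
      integral {y..} (\<lambda>\<eta>. exp (gam q \<eta>) * (tailE q \<eta>)\<^sup>2))) \<longlongrightarrow> 1) at_top"
proof -
  define S where "S y = integral {y..} (\<lambda>\<eta>. exp (gam q \<eta>) * (tailE q \<eta>)\<^sup>2)" for y
  have "((\<lambda>y. S y / (exp (2 * gam q y) * (tailE q y) ^ 3)) \<longlongrightarrow> 1) at_top"
    using tailE_square_integral_tendsto_1 unfolding S_def by blast
  then have "((\<lambda>y. (2 * q y * exp (gam q y) * tailE q y) ^ 3 * (S y / (exp (2 * gam q y) * (tailE q y) ^ 3)))
      \<longlongrightarrow> 1 ^ 3 * 1) at_top"
    by (intro tendsto_intros q_exp_gam_tailE_tendsto_1)
  moreover have "eventually (\<lambda>y. (2 * q y * exp (gam q y) * tailE q y) ^ 3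
      * (S y / (exp (2 * gam q y) * (tailE q y) ^ 3)) = 8 * (q y) ^ 3 * (exp (gam q y) * S y)) at_top"
    using eventually_gt_at_top[of 0]
  proof eventually_elim
    case (elim y)
    then have "tailE q y \<noteq> 0" using tailE_pos by force
    then show ?case
      unfolding exp_double by (simp add: field_simps power3_eq_cube power2_eq_square)
  qed
  ultimately have "((\<lambda>y. 8 * (q y) ^ 3 * (exp (gam q y) * S y)) \<longlongrightarrow> 1 ^ 3 * 1) at_top"
    by (rule Lim_transform_eventually)
  then show ?thesis by (simp add: S_def)
qed

lemma double_tail_integral_tendsto_1:
  "eventually (\<lambda>z. (\<lambda>y. exp (gam q y) *
      integral {y..} (\<lambda>\<eta>. exp (gam q \<eta>) * (tailE q \<eta>)\<^sup>2)) integrable_on {z..}) at_top \<and>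
    eventually (\<lambda>z. (\<lambda>y. 1 / (q y) ^ 3) integrable_on {z..}) at_top \<and>
    ((\<lambda>z. 8 * integral {z..} (\<lambda>y. exp (gam q y) *
      integral {y..} (\<lambda>\<eta>. exp (gam q \<eta>) * (tailE q \<eta>)\<^sup>2))
      / integral {z..} (\<lambda>y. 1 / (q y) ^ 3)) \<longlongrightarrow> 1) at_top"
proof -
  define h where "h y = exp (gam q y) * (tailE q y)\<^sup>2" for y
  define S where "S y = integral {y..} h" for y
  have int_eventually: "eventually (\<lambda>z. h integrable_on {z..} \<and> (\<lambda>y. 1 / q y) integrable_on {z..}) at_top"
    using eventually_conj[OF tailE_square_integral_tendsto_1[THEN conjunct1]
        frak_m_bigM_tendsto_1[THEN conjunct1]]
    unfolding h_def .
  obtain a where a_pos: "a > 0" and q_ge: "\<And>y. y \<ge> a \<Longrightarrow> q y \<ge> 1"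
    and int: "\<And>y. y \<ge> a \<Longrightarrow> h integrable_on {y..} \<and> (\<lambda>y. 1 / q y) integrable_on {y..}"
    using beyond_q_ge_1[OF int_eventually] by metis
  have int_h: "h integrable_on {a..}" and int_inverse_q: "(\<lambda>y. 1 / q y) integrable_on {a..}"
    using int[OF order_refl] by auto
  have h_pos: "h y > 0" if "y \<ge> a" for y
    using tailE_pos[of y] that a_pos by (simp add: h_def)
  have h_cont: "continuous_on {a..} h"
    unfolding h_def[abs_def] using a_pos by (intro continuous_intros continuous_on_gam continuous_on_tailE)
  have S_cont: "continuous_on {a+1..} S"
    unfolding S_def[abs_def] using h_pos
    by (intro continuous_on_tail_integral[OF h_cont int_h]) (auto simp: less_imp_le)
  have S_pos: "S y > 0" if "y \<ge> a" for y
    unfolding S_def using that h_pos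
    by (intro integral_atLeast_pos continuous_on_subset[OF h_cont] integrable_on_atLeast_mono[OF int_h])
      (auto simp: less_imp_le)
  have q_nz: "\<forall>y\<in>{z..}. q y \<noteq> 0" if "z \<ge> a" for z
  proof
    fix y assume "y \<in> {z..}"
    then show "q y \<noteq> 0" using q_ge[of y] that by simp
  qed
  have int_q3: "(\<lambda>y. 1 / q y ^ 3) integrable_on {z..}" if "z \<ge> a" for z
  proof (rule integrable_on_atLeast_dominated)
    show "continuous_on {z..} (\<lambda>y. 1 / q y ^ 3)"
      using q_nz[OF that] a_pos that by (intro continuous_intros continuous_on_q) simp_all
    show "(\<lambda>y. 1 / q y) integrable_on {z..}"
    proof (rule integrable_on_atLeast_mono[OF int_inverse_q])
      show "1 / q y \<ge> 0" if "y \<ge> a" for y using q_ge[OF that] by simp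
    qed (use that in simp)
    show "\<bar>1 / q y ^ 3\<bar> \<le> 1 / q y" if "y \<ge> z" for y
    proof -
      have "q y \<ge> 1" using q_ge \<open>z \<ge> a\<close> that by simp
      then have "q y \<le> q y ^ 3"
        using power_increasing[of 1 3 "q y"] by simp
      with \<open>q y \<ge> 1\<close> show ?thesis by (simp add: frac_le)
    qed
  qed
  have "eventually (\<lambda>z. (\<lambda>y. 8 * (exp (gam q y) * S y)) integrable_on {z..}) at_top \<and>
    ((\<lambda>z. integral {z..} (\<lambda>y. 1 / q y ^ 3) / integral {z..} (\<lambda>y. 8 * (exp (gam q y) * S y)))
      \<longlongrightarrow> 1) at_top"
  proof (rule tail_integral_ratio_tendsto_1[OF _ _ int_q3])
    show "continuous_on {a+1..} (\<lambda>y. 1 / q y ^ 3)"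
      using q_nz[of "a+1"] a_pos by (intro continuous_intros continuous_on_q) simp_all
    show "continuous_on {a+1..} (\<lambda>y. 8 * (exp (gam q y) * S y))"
      using a_pos by (intro continuous_intros continuous_on_gam S_cont) simp
    show "1 / q y ^ 3 > 0 \<and> 8 * (exp (gam q y) * S y) > 0" if "y \<ge> a + 1" for y
      using q_ge[of y] S_pos[of y] that by simp
    show "((\<lambda>y. 1 / q y ^ 3 / (8 * (exp (gam q y) * S y))) \<longlongrightarrow> 1) at_top"
      by (rule ratio_tendsto_1_flip)
        (use q_cube_exp_gam_tail_integral_tendsto_1 in \<open>simp add: S_def h_def[abs_def] ac_simps\<close>)
  qed simp
  then have "eventually (\<lambda>z. (\<lambda>y. exp (gam q y) * S y) integrable_on {z..}) at_top"
    and "((\<lambda>z. integral {z..} (\<lambda>y. 8 * (exp (gam q y) * S y)) / integral {z..} (\<lambda>y. 1 / q y ^ 3))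
      \<longlongrightarrow> 1) at_top"
    by (auto intro: ratio_tendsto_1_flip)
  moreover have "eventually (\<lambda>z. (\<lambda>y. 1 / q y ^ 3) integrable_on {z..}) at_top"
    using int_q3 unfolding eventually_at_top_linorder by blast
  ultimately show ?thesis by (simp add: S_def h_def[abs_def])
qed

end

theorem corollaryA2:
  fixes q q' :: "real \<Rightarrow> real"
  assumes C1_deriv: "\<And>x. x \<ge> 0 \<Longrightarrow> (q has_real_derivative q' x) (at x within {0..})"
    and C1_cont: "continuous_on {0..} q'"
    and H1_inner: "(\<lambda>\<xi>. exp (- gam q \<xi>)) integrable_on {0..}"
    and H1_outer: "(\<lambda>y. exp (gam q y) * tailE q y) integrable_on {0..}"
    and H2_q: "filterlim q at_top at_top"
    and H2_q': "((\<lambda>x. q' x / (q x)\<^sup>2) \<longlongrightarrow> 0) at_top"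
  shows "(((\<lambda>z. 2 * q z * exp (gam q z) * tailE q z) \<longlongrightarrow> 1) at_top) \<and>
    (eventually (\<lambda>z. (\<lambda>y. 1 / q y) integrable_on {z..}) at_top) \<and>
    (((\<lambda>z. frak_m q z / bigM q z) \<longlongrightarrow> 1) at_top) \<and>
    (eventually (\<lambda>z. (\<lambda>y. exp (gam q y) * (tailE q y)\<^sup>2) integrable_on {z..}) at_top) \<and>
    (((\<lambda>z. integral {z..} (\<lambda>y. exp (gam q y) * (tailE q y)\<^sup>2)
              / (exp (2 * gam q z) * (tailE q z) ^ 3)) \<longlongrightarrow> 1) at_top) \<and>
    (eventually (\<lambda>z. (\<lambda>y. exp (gam q y) *
              integral {y..} (\<lambda>\<eta>. exp (gam q \<eta>) * (tailE q \<eta>)\<^sup>2)) integrable_on {z..}) at_top) \<and>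
    (eventually (\<lambda>z. (\<lambda>y. 1 / (q y) ^ 3) integrable_on {z..}) at_top) \<and>
    (((\<lambda>z. 8 * integral {z..} (\<lambda>y. exp (gam q y) *
              integral {y..} (\<lambda>\<eta>. exp (gam q \<eta>) * (tailE q \<eta>)\<^sup>2))
              / integral {z..} (\<lambda>y. 1 / (q y) ^ 3)) \<longlongrightarrow> 1) at_top)"
proof -
  interpret drift_H1_H2 q q'
    using assms by unfold_locales
  show ?thesis
    using q_exp_gam_tailE_tendsto_1 frak_m_bigM_tendsto_1 tailE_square_integral_tendsto_1
      double_tail_integral_tendsto_1
    by blast
qed

end
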